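(* Let $q$ be even and let $H$ be the point-line incidence matrix of the Desarguesian projective plane $\mathrm{PG}(2,q)$, regarded as a binary matrix, and let $C=\ker(H)=\{c\in\mathbb{F}_2^{q^2+q+1} : cH^\top=0\}$ with minimum distance $d$. Then one round of the bit-flipping decoding algorithm with respect to $H$ corrects every error of Hamming weight at most $\lfloor\frac{d-1}{2}\rfloor$; that is, for every $c\in C$ and every $e\in\mathbb{F}_2^{q^2+q+1}$ with $\mathrm{wt}(e)\le\lfloor\frac{d-1}{2}\rfloor$, one round of bit-flipping applied to $y=c+e$ outputs $c$.
   Context: $\mathrm{PG}(2,q)$ is the projective plane whose points and lines are the 1- and 2-dimensional subspaces of $\mathbb{F}_q^3$; it has $q^2+q+1$ points and $q^2+q+1$ lines, each line contains $q+1$ points and each point lies on $q+1$ lines. Its incidence matrix has rows indexed by points and columns by lines, with entry $1$ iff the point lies on the line. For a binary matrix $H$ with $m$ rows, $n$ columns and constant column weight $v$, one round of the bit-flipping algorithm on input $y\in\mathbb{F}_2^n$ is: compute the syndrome $s=Hy^\top\in\mathbb{F}_2^m$; for each column $j$ let $u_j$ be the number of rows $i$ with $H_{ij}=1$ and $s_i=1$ (unsatisfied parity checks involving $j$); output $y$ with the bits in positions $\{j : u_j> v/2\}$ flipped. The Hamming weight $\mathrm{wt}(e)$ is the number of nonzero coordinates of $e$. *)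

theory Defs
  imports Main
begin

text \<open>Vectors of F_q^3 are triples; F_2 is represented by bool (True = 1, addition = xor).\<close>

type_synonym 'a vec3 = "'a \<times> 'a \<times> 'a"

definition vscale :: "'a::field \<Rightarrow> 'a vec3 \<Rightarrow> 'a vec3" where
  "vscale c v = (case v of (x, y, z) \<Rightarrow> (c * x, c * y, c * z))"

definition vadd :: "'a::field vec3 \<Rightarrow> 'a vec3 \<Rightarrow> 'a vec3" where
  "vadd u v = (case u of (x, y, z) \<Rightarrow> case v of (x', y', z') \<Rightarrow> (x + x', y + y', z + z'))"

definition lin_indep2 :: "'a::field vec3 \<Rightarrow> 'a vec3 \<Rightarrow> bool" where
  "lin_indep2 u w \<longleftrightarrow> (\<forall>s t. vadd (vscale s u) (vscale t w) = (0, 0, 0) \<longrightarrow> s = 0 \<and> t = 0)"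

definition pg_points :: "'a::field vec3 set set" where
  "pg_points = {{vscale s v | s. True} | v. v \<noteq> (0, 0, 0)}"

definition pg_lines :: "'a::field vec3 set set" where
  "pg_lines = {{vadd (vscale s u) (vscale t w) | s t. True} | u w. lin_indep2 u w}"

text \<open>Generic binary parity-check matrix given by rows R, columns J and incidence inc
  (H_{ij} = 1 iff inc i j). Binary words are functions J \<Rightarrow> bool.\<close>

definition syndrome :: "'r set \<Rightarrow> 'c set \<Rightarrow> ('r \<Rightarrow> 'c \<Rightarrow> bool) \<Rightarrow> ('c \<Rightarrow> bool) \<Rightarrow> 'r \<Rightarrow> bool" where
  "syndrome R J inc y i \<longleftrightarrow> odd (card {j \<in> J. inc i j \<and> y j})"

definition unsat_count :: "'r set \<Rightarrow> 'c set \<Rightarrow> ('r \<Rightarrow> 'c \<Rightarrow> bool) \<Rightarrow> ('c \<Rightarrow> bool) \<Rightarrow> 'c \<Rightarrow> nat" where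
  "unsat_count R J inc y j = card {i \<in> R. inc i j \<and> syndrome R J inc y i}"

definition col_weight :: "'r set \<Rightarrow> ('r \<Rightarrow> 'c \<Rightarrow> bool) \<Rightarrow> 'c \<Rightarrow> nat" where
  "col_weight R inc j = card {i \<in> R. inc i j}"

definition bitflip_round :: "'r set \<Rightarrow> 'c set \<Rightarrow> ('r \<Rightarrow> 'c \<Rightarrow> bool) \<Rightarrow> ('c \<Rightarrow> bool) \<Rightarrow> ('c \<Rightarrow> bool)" where
  "bitflip_round R J inc y = (\<lambda>j. if j \<in> J \<and> 2 * unsat_count R J inc y j > col_weight R inc j
                                    then \<not> y j else y j)"

definition words :: "'c set \<Rightarrow> ('c \<Rightarrow> bool) set" where
  "words J = {y. \<forall>j. j \<notin> J \<longrightarrow> \<not> y j}"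

definition wt :: "('c \<Rightarrow> bool) \<Rightarrow> nat" where
  "wt y = card {j. y j}"

definition bin_kernel :: "'r set \<Rightarrow> 'c set \<Rightarrow> ('r \<Rightarrow> 'c \<Rightarrow> bool) \<Rightarrow> ('c \<Rightarrow> bool) set" where
  "bin_kernel R J inc = {c \<in> words J. \<forall>i \<in> R. \<not> syndrome R J inc c i}"

definition min_dist :: "('c \<Rightarrow> bool) set \<Rightarrow> nat" where
  "min_dist C = Inf {wt c | c. c \<in> C \<and> c \<noteq> (\<lambda>_. False)}"

definition xorw :: "('c \<Rightarrow> bool) \<Rightarrow> ('c \<Rightarrow> bool) \<Rightarrow> ('c \<Rightarrow> bool)" where
  "xorw c e = (\<lambda>j. c j \<noteq> e j)"

text \<open>Incidence matrix of PG(2,q): rows = points, columns = lines, P on L iff P \<subseteq> L.\<close>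
abbreviation pg_inc :: "'a vec3 set \<Rightarrow> 'a vec3 set \<Rightarrow> bool" where
  "pg_inc P L \<equiv> P \<subseteq> L"

end

theory Submission
  imports Defs
begin

text \<open>Two distinct lines of PG(2,q) share at most one point, and every line carries q + 1
  points. If the error e consists of t lines, then a line in error has at least q + 2 - t points
  on no other error line, and each of them is an unsatisfied check; a line not in error meets
  the error lines in at most t points. The majority rule therefore flips exactly the lines in
  error as soon as 2 t \<le> q + 1. For q even, the q + 2 lines of a dual hyperoval pass through
  every point an even number of times, so they form a codeword; hence d \<le> q + 2 and
  2 t \<le> d - 1 \<le> q + 1.\<close>

lemma even_card_fixpoint_free_involution:
  assumes "finite A"
    and "\<And>x. x \<in> A \<Longrightarrow> f x \<in> A"
    and "\<And>x. x \<in> A \<Longrightarrow> f (f x) = x"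
    and "\<And>x. x \<in> A \<Longrightarrow> f x \<noteq> x"
  shows "even (card A)"
  using assms
proof (induction A rule: finite_psubset_induct)
  case (psubset A)
  show ?case
  proof (cases "A = {}")
    case False
    then obtain a where a: "a \<in> A" by blast
    let ?B = "A - {a, f a}"
    have "even (card ?B)"
    proof (rule psubset.IH)
      show "?B \<subset> A" using a by blast
      fix x assume x: "x \<in> ?B"
      then show "f (f x) = x" "f x \<noteq> x" using psubset.prems by auto
      show "f x \<in> ?B" using x psubset.prems a by (metis Diff_iff insert_iff singletonD)
    qed
    moreover have "card A = card ?B + 2"
    proof -
      have "f a \<noteq> a" using a by (rule psubset.prems(3))
      then have "{a, f a} \<subseteq> A" "card {a, f a} = 2" using a psubset.prems(1) by auto
      then show ?thesis using psubset.hyps card_mono[of A "{a, f a}"] by (simp add: card_Diff_subset)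
    qed
    ultimately show ?thesis by simp
  qed simp
qed

lemma syndrome_xorw:
  assumes "finite J"
  shows "syndrome R J inc (xorw c e) i \<longleftrightarrow> syndrome R J inc c i \<noteq> syndrome R J inc e i"
proof -
  let ?N = "{j \<in> J. inc i j}"
  have card_eq: "card {j \<in> J. inc i j \<and> y j} = (\<Sum>j\<in>?N. of_bool (y j))" for y
    using assms by (simp add: Collect_conj_eq Int_assoc)
  have "even (card {j \<in> J. inc i j \<and> c j} + card {j \<in> J. inc i j \<and> e j})
      \<longleftrightarrow> even (\<Sum>j\<in>?N. of_bool (c j) + of_bool (e j) :: nat)"
    by (simp add: card_eq sum.distrib)
  also have "\<dots> \<longleftrightarrow> even (card {j \<in> ?N. odd (of_bool (c j) + of_bool (e j) :: nat)})"
    using assms by (simp add: even_sum_iff)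
  also have "{j \<in> ?N. odd (of_bool (c j) + of_bool (e j) :: nat)} = {j \<in> J. inc i j \<and> xorw c e j}"
    by (auto simp: xorw_def)
  finally show ?thesis unfolding syndrome_def by auto
qed

lemma unsat_count_xorw_codeword:
  assumes "finite J" and "c \<in> bin_kernel R J inc"
  shows "unsat_count R J inc (xorw c e) j = unsat_count R J inc e j"
  using assms unfolding unsat_count_def bin_kernel_def
  by (auto simp: syndrome_xorw intro!: arg_cong[where f = card])

lemma unsat_count_le_wt:
  assumes "finite R" "finite J" "e \<in> words J" "\<not> e j"
    and meet: "\<And>k. k \<in> J \<Longrightarrow> j \<noteq> k \<Longrightarrow> card {i \<in> R. inc i j \<and> inc i k} \<le> 1"
  shows "unsat_count R J inc e j \<le> wt e"
proof -
  let ?E = "{k. e k}"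
  have E: "?E \<subseteq> J" "finite ?E" using assms(2,3) unfolding words_def by (auto intro: finite_subset)
  have "{i \<in> R. inc i j \<and> syndrome R J inc e i} \<subseteq> (\<Union>k\<in>?E. {i \<in> R. inc i j \<and> inc i k})"
    unfolding syndrome_def by (force dest: odd_pos simp: card_gt_0_iff)
  then have "unsat_count R J inc e j \<le> card (\<Union>k\<in>?E. {i \<in> R. inc i j \<and> inc i k})"
    unfolding unsat_count_def by (intro card_mono finite_subset[OF _ assms(1)]) auto
  also have "\<dots> \<le> (\<Sum>k\<in>?E. card {i \<in> R. inc i j \<and> inc i k})"
    by (rule card_UN_le[OF E(2)])
  also have "\<dots> \<le> (\<Sum>k\<in>?E. 1)"
    using E(1) assms(4) by (intro sum_mono meet) auto
  finally show ?thesis by (simp add: wt_def)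
qed

lemma col_weight_le_unsat_count:
  assumes "finite R" "finite J" "e \<in> words J" "e j"
    and meet: "\<And>k. k \<in> J \<Longrightarrow> j \<noteq> k \<Longrightarrow> card {i \<in> R. inc i j \<and> inc i k} \<le> 1"
  shows "col_weight R inc j + 1 \<le> unsat_count R J inc e j + wt e"
proof -
  let ?E = "{k. e k}"
  let ?col = "{i \<in> R. inc i j}"
  let ?shared = "\<Union>k\<in>?E - {j}. {i \<in> R. inc i j \<and> inc i k}"
  have E: "?E \<subseteq> J" "finite ?E" using assms(2,3) unfolding words_def by (auto intro: finite_subset)
  have "card ?shared \<le> (\<Sum>k\<in>?E - {j}. card {i \<in> R. inc i j \<and> inc i k})"
    using E(2) by (intro card_UN_le) simp
  also have "\<dots> \<le> (\<Sum>k\<in>?E - {j}. 1)"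
    using E(1) by (intro sum_mono meet) auto
  also have "\<dots> = card (?E - {j})" by simp
  finally have "card ?shared \<le> card (?E - {j})" .
  moreover have "card (?E - {j}) + 1 = wt e"
    using card.remove[OF E(2), of j] assms(4) unfolding wt_def by simp
  ultimately have shared: "card ?shared + 1 \<le> wt e" by linarith
  have "?col - ?shared \<subseteq> {i \<in> R. inc i j \<and> syndrome R J inc e i}"
  proof
    fix i assume i: "i \<in> ?col - ?shared"
    then have "{k \<in> J. inc i k \<and> e k} = {j}" using E(1) assms(4) by auto
    with i show "i \<in> {i \<in> R. inc i j \<and> syndrome R J inc e i}" by (simp add: syndrome_def)
  qed
  then have "card (?col - ?shared) \<le> unsat_count R J inc e j"
    unfolding unsat_count_def using assms(1) by (intro card_mono) auto
  moreover have "card ?col - card ?shared \<le> card (?col - ?shared)"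
    by (intro diff_card_le_card_Diff finite_subset[OF _ assms(1)]) auto
  ultimately show ?thesis using shared unfolding col_weight_def by linarith
qed

lemma bitflip_round_corrects_errors:
  assumes "finite R" "finite J" "c \<in> bin_kernel R J inc" "e \<in> words J"
    and meet: "\<And>j k. j \<in> J \<Longrightarrow> k \<in> J \<Longrightarrow> j \<noteq> k
                 \<Longrightarrow> card {i \<in> R. inc i j \<and> inc i k} \<le> 1"
    and weight: "\<And>j. j \<in> J \<Longrightarrow> 2 * wt e \<le> col_weight R inc j"
  shows "bitflip_round R J inc (xorw c e) = c"
proof
  fix j
  have outside: "\<not> c j \<and> \<not> e j" if "j \<notin> J"
    using assms(3,4) that unfolding bin_kernel_def words_def by auto
  have "j \<in> J \<and> 2 * unsat_count R J inc e j > col_weight R inc j \<longleftrightarrow> e j"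
  proof (cases "j \<in> J")
    case True
    show ?thesis
    proof (cases "e j")
      case True
      have "col_weight R inc j + 1 \<le> unsat_count R J inc e j + wt e"
        by (rule col_weight_le_unsat_count[where inc = inc, OF assms(1,2,4) True meet[OF \<open>j \<in> J\<close>]])
      then show ?thesis using weight[OF \<open>j \<in> J\<close>] \<open>j \<in> J\<close> True by linarith
    next
      case False
      have "unsat_count R J inc e j \<le> wt e"
        by (rule unsat_count_le_wt[where inc = inc, OF assms(1,2,4) False meet[OF \<open>j \<in> J\<close>]])
      then show ?thesis using weight[OF \<open>j \<in> J\<close>] False by linarith
    qed
  qed (use outside in simp)
  then show "bitflip_round R J inc (xorw c e) j = c j"
    unfolding bitflip_round_def unsat_count_xorw_codeword[OF assms(2,3)] by (auto simp: xorw_def)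
qed

definition span1 :: "'a::field vec3 \<Rightarrow> 'a vec3 set" where
  "span1 v = {vscale s v | s. True}"

definition span2 :: "'a::field vec3 \<Rightarrow> 'a vec3 \<Rightarrow> 'a vec3 set" where
  "span2 u w = {vadd (vscale s u) (vscale t w) | s t. True}"

lemma vscale_triple [simp]: "vscale c (x, y, z) = (c * x, c * y, c * z)"
  by (simp add: vscale_def)

lemma vadd_triple [simp]: "vadd (a, b, c) (x, y, z) = (a + x, b + y, c + z)"
  by (simp add: vadd_def)

lemma pg_points_eq: "pg_points = {span1 v | v. v \<noteq> (0, 0, 0)}"
  unfolding pg_points_def span1_def by simp

lemma pg_lines_eq: "pg_lines = {span2 u w | u w. lin_indep2 u w}"
  unfolding pg_lines_def span2_def by simp

lemma span2_mem_pg_lines: "lin_indep2 u w \<Longrightarrow> span2 u w \<in> pg_lines"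
  unfolding pg_lines_eq by blast

lemma lin_indep2_triple_iff:
  "lin_indep2 (a, b, c) (x, y, z) \<longleftrightarrow>
     (\<forall>s t. s * a + t * x = 0 \<and> s * b + t * y = 0 \<and> s * c + t * z = 0 \<longrightarrow> s = 0 \<and> t = 0)"
  unfolding lin_indep2_def by auto

lemma mem_span1_triple_iff:
  "(x, y, z) \<in> span1 (a, b, c) \<longleftrightarrow> (\<exists>s. x = s * a \<and> y = s * b \<and> z = s * c)"
  unfolding span1_def by auto

lemma mem_span2_triple_iff:
  "(x, y, z) \<in> span2 (a, b, c) (a', b', c') \<longleftrightarrow>
     (\<exists>s t. x = s * a + t * a' \<and> y = s * b + t * b' \<and> z = s * c + t * c')"
  unfolding span2_def by auto

lemma mem_span1_self: "v \<in> span1 v"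
  by (cases v) (auto simp: mem_span1_triple_iff intro: exI[of _ 1])

lemma vscale_eq_0_iff: "vscale s v = (0, 0, 0) \<longleftrightarrow> s = 0 \<or> v = (0, 0, 0)"
  by (cases v) auto

lemma vscale_vscale: "vscale a (vscale b v) = vscale (a * b) v"
  by (cases v) (simp add: mult.assoc)

lemma vscale_mem_span2:
  assumes "v \<in> span2 u w"
  shows "vscale s v \<in> span2 u w"
proof -
  obtain a b where v: "v = vadd (vscale a u) (vscale b w)" using assms unfolding span2_def by blast
  have "vscale s v = vadd (vscale (s * a) u) (vscale (s * b) w)"
    unfolding v by (cases u, cases w) (simp add: algebra_simps)
  then show ?thesis unfolding span2_def by blast
qed

lemma span1_subset_span2_iff: "span1 v \<subseteq> span2 u w \<longleftrightarrow> v \<in> span2 u w"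
proof
  show "span1 v \<subseteq> span2 u w \<Longrightarrow> v \<in> span2 u w" using mem_span1_self by blast
qed (auto simp: span1_def vscale_mem_span2)

lemma pg_point_on_line_iff: "L \<in> pg_lines \<Longrightarrow> span1 v \<subseteq> L \<longleftrightarrow> v \<in> L"
  unfolding pg_lines_eq using span1_subset_span2_iff by blast

lemma lin_indep2_lincomb:
  assumes "lin_indep2 u w" and "a * d - b * c \<noteq> 0"
  shows "lin_indep2 (vadd (vscale a u) (vscale b w)) (vadd (vscale c u) (vscale d w))"
proof -
  obtain u1 u2 u3 w1 w2 w3 where uw: "u = (u1, u2, u3)" "w = (w1, w2, w3)" by (cases u, cases w) auto
  show ?thesis unfolding uw lin_indep2_triple_iff vscale_triple vadd_triple
  proof (intro allI impI)
    fix s t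
    assume "s * (a * u1 + b * w1) + t * (c * u1 + d * w1) = 0 \<and>
      s * (a * u2 + b * w2) + t * (c * u2 + d * w2) = 0 \<and>
      s * (a * u3 + b * w3) + t * (c * u3 + d * w3) = 0"
    then have "(s * a + t * c) * u1 + (s * b + t * d) * w1 = 0 \<and>
      (s * a + t * c) * u2 + (s * b + t * d) * w2 = 0 \<and>
      (s * a + t * c) * u3 + (s * b + t * d) * w3 = 0"
      by (simp add: algebra_simps)
    then have st: "s * a + t * c = 0" "s * b + t * d = 0"
      using assms(1) unfolding uw lin_indep2_triple_iff by blast+
    have "s * (a * d - b * c) = d * (s * a + t * c) - c * (s * b + t * d)"
      "t * (a * d - b * c) = a * (s * b + t * d) - b * (s * a + t * c)"
      by (simp_all add: algebra_simps)
    then show "s = 0 \<and> t = 0" using st assms(2) by simp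
  qed
qed

lemma lincomb_det_neq_0:
  assumes "lin_indep2 (vadd (vscale a u) (vscale b w)) (vadd (vscale c u) (vscale d w))"
  shows "a * d - b * c \<noteq> 0"
proof
  assume det: "a * d - b * c = 0"
  let ?v1 = "vadd (vscale a u) (vscale b w)" and ?v2 = "vadd (vscale c u) (vscale d w)"
  have indep: "s = 0 \<and> t = 0" if "vadd (vscale s ?v1) (vscale t ?v2) = (0, 0, 0)" for s t
    using assms that unfolding lin_indep2_def by blast
  have "vadd (vscale d ?v1) (vscale (- b) ?v2) = vscale (a * d - b * c) u"
    "vadd (vscale (- c) ?v1) (vscale a ?v2) = vscale (a * d - b * c) w"
    by (cases u, cases w, simp add: algebra_simps)+
  then have "d = 0 \<and> b = 0" "c = 0 \<and> a = 0"
    using indep[of d "- b"] indep[of "- c" a] det by (simp_all add: vscale_eq_0_iff)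
  then have "vadd (vscale 1 ?v1) (vscale 0 ?v2) = (0, 0, 0)"
    by (cases u, cases w) simp
  then show False using indep[of 1 0] by simp
qed

lemma span2_eq_if_mem:
  assumes "v1 \<in> span2 u w" "v2 \<in> span2 u w" "lin_indep2 v1 v2"
  shows "span2 v1 v2 = span2 u w"
proof -
  obtain a b c d where v: "v1 = vadd (vscale a u) (vscale b w)" "v2 = vadd (vscale c u) (vscale d w)"
    using assms(1,2) unfolding span2_def by blast
  have det: "a * d - b * c \<noteq> 0" using assms(3) unfolding v by (rule lincomb_det_neq_0)
  show ?thesis
  proof
    show "span2 v1 v2 \<subseteq> span2 u w"
    proof
      fix x assume "x \<in> span2 v1 v2"
      then obtain s t where "x = vadd (vscale s v1) (vscale t v2)" unfolding span2_def by blast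
      then have "x = vadd (vscale (s * a + t * c) u) (vscale (s * b + t * d) w)"
        unfolding v by (cases u, cases w) (simp add: algebra_simps)
      then show "x \<in> span2 u w" unfolding span2_def by blast
    qed
  next
    show "span2 u w \<subseteq> span2 v1 v2"
    proof
      fix x assume "x \<in> span2 u w"
      then obtain s t where x: "x = vadd (vscale s u) (vscale t w)" unfolding span2_def by blast
      have cramer: "s * p + t * r = (s * d - t * c) / (a * d - b * c) * (a * p + b * r)
          + (t * a - s * b) / (a * d - b * c) * (c * p + d * r)" for p r
      proof -
        have "(s * d - t * c) * (a * p + b * r) + (t * a - s * b) * (c * p + d * r)
            = (s * p + t * r) * (a * d - b * c)"
          by (simp add: algebra_simps)
        then show ?thesis using det by (simp add: add_divide_distrib[symmetric])
      qed
      then have "x = vadd (vscale ((s * d - t * c) / (a * d - b * c)) v1)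
                          (vscale ((t * a - s * b) / (a * d - b * c)) v2)"
        unfolding v x by (cases u, cases w) simp
      then show "x \<in> span2 v1 v2" unfolding span2_def by blast
    qed
  qed
qed

lemma span1_vscale:
  assumes "s \<noteq> 0"
  shows "span1 (vscale s v) = span1 v"
proof
  show "span1 (vscale s v) \<subseteq> span1 v" unfolding span1_def by (auto simp: vscale_vscale)
  show "span1 v \<subseteq> span1 (vscale s v)"
  proof
    fix x assume "x \<in> span1 v"
    then obtain r where "x = vscale r v" unfolding span1_def by blast
    then have "x = vscale (r / s) (vscale s v)" using assms by (simp add: vscale_vscale)
    then show "x \<in> span1 (vscale s v)" unfolding span1_def by blast
  qed
qed

lemma span1_neq_if_lin_indep2:
  assumes "lin_indep2 v1 v2"
  shows "span1 v1 \<noteq> span1 v2"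
proof
  assume "span1 v1 = span1 v2"
  then obtain s where "v1 = vscale s v2" using mem_span1_self[of v1] unfolding span1_def by auto
  then have "vadd (vscale 1 v1) (vscale (- s) v2) = (0, 0, 0)" by (cases v2) simp
  then show False using assms unfolding lin_indep2_def by fastforce
qed

lemma lin_indep2_if_span1_neq:
  assumes "span1 v1 \<noteq> span1 v2" "v1 \<noteq> (0, 0, 0)" "v2 \<noteq> (0, 0, 0)"
  shows "lin_indep2 v1 v2"
  unfolding lin_indep2_def
proof (intro allI impI)
  fix s t assume dep: "vadd (vscale s v1) (vscale t v2) = (0, 0, 0)"
  show "s = 0 \<and> t = 0"
  proof (cases "s = 0")
    case True
    then show ?thesis using dep assms(3) by (cases v1, cases v2) auto
  next
    case False
    then have v1: "v1 = vscale (- t / s) v2"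
      using dep by (cases v1, cases v2) (auto simp: field_simps add_eq_0_iff)
    then have "t \<noteq> 0" using assms(2) by (auto simp: vscale_eq_0_iff)
    then have "span1 v1 = span1 v2" unfolding v1 using False by (simp add: span1_vscale)
    then show ?thesis using assms(1) by simp
  qed
qed

lemma pg_line_eq_if_two_common_points:
  assumes "L \<in> pg_lines" "M \<in> pg_lines" "P \<in> pg_points" "Q \<in> pg_points" "P \<noteq> Q"
    and "P \<subseteq> L" "Q \<subseteq> L" "P \<subseteq> M" "Q \<subseteq> M"
  shows "L = M"
proof -
  obtain v1 v2 where P: "P = span1 v1" "v1 \<noteq> (0, 0, 0)" and Q: "Q = span1 v2" "v2 \<noteq> (0, 0, 0)"
    using assms(3,4) unfolding pg_points_eq by blast
  have indep: "lin_indep2 v1 v2"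
    using assms(5) P Q by (intro lin_indep2_if_span1_neq) auto
  have on_span: "N = span2 v1 v2" if "N \<in> pg_lines" "P \<subseteq> N" "Q \<subseteq> N" for N
  proof -
    obtain u w where N: "N = span2 u w" using \<open>N \<in> pg_lines\<close> unfolding pg_lines_eq by blast
    have "v1 \<in> span2 u w" "v2 \<in> span2 u w"
      using that(2,3) unfolding P(1) Q(1) N span1_subset_span2_iff by simp_all
    then show ?thesis unfolding N using indep by (metis span2_eq_if_mem)
  qed
  show ?thesis using on_span[OF assms(1,6,7)] on_span[OF assms(2,8,9)] by simp
qed

lemma card_common_points_le_1:
  assumes "L \<in> pg_lines" "M \<in> pg_lines" "L \<noteq> M"
  shows "card {P \<in> pg_points. P \<subseteq> L \<and> P \<subseteq> M} \<le> 1"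
proof (cases "finite {P \<in> pg_points. P \<subseteq> L \<and> P \<subseteq> M}")
  case True
  have "P = Q" if "P \<in> pg_points" "Q \<in> pg_points" "P \<subseteq> L" "P \<subseteq> M" "Q \<subseteq> L" "Q \<subseteq> M" for P Q
    using pg_line_eq_if_two_common_points[OF assms(1,2) that(1,2) _ that(3,5,4,6)] assms(3) by blast
  then show ?thesis using card_le_Suc0_iff_eq[OF True] by auto
qed simp

lemma finite_vec3_sets:
  assumes "finite (UNIV :: 'a set)"
  shows "finite (S :: 'a vec3 set set)"
proof -
  have "finite (UNIV :: 'a vec3 set)" using assms by (simp add: finite_Prod_UNIV)
  then show ?thesis by (simp add: finite_subset[of S UNIV] Finite_Set.finite_set)
qed

lemma card_points_on_pg_line_ge:
  assumes "finite (UNIV :: 'a::field set)" "L \<in> pg_lines"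
  shows "card (UNIV :: 'a set) + 1 \<le> card {P \<in> pg_points. P \<subseteq> (L :: 'a vec3 set)}"
proof -
  obtain u w where L: "L = span2 u w" "lin_indep2 u w" using assms(2) unfolding pg_lines_eq by blast
  define pt where "pt a b = span1 (vadd (vscale a u) (vscale b w))" for a b
  have on_L: "pt a b \<in> {P \<in> pg_points. P \<subseteq> L}" if "(a, b) \<noteq> (0, 0)" for a b
  proof -
    have "vadd (vscale a u) (vscale b w) \<noteq> (0, 0, 0)" using L(2) that unfolding lin_indep2_def by blast
    moreover have "vadd (vscale a u) (vscale b w) \<in> L" unfolding L span2_def by blast
    ultimately show ?thesis
      unfolding pt_def pg_points_eq L(1) mem_Collect_eq span1_subset_span2_iff by blast
  qed
  have pt_neq: "pt a b \<noteq> pt c d" if "a * d - b * c \<noteq> 0" for a b c d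
    unfolding pt_def using lin_indep2_lincomb[OF L(2) that] by (rule span1_neq_if_lin_indep2)
  have "inj (\<lambda>s. pt s 1)"
  proof (rule injI, rule ccontr)
    fix s s' assume "pt s 1 = pt s' 1" "s \<noteq> s'"
    then show False using pt_neq[where a = s and b = 1 and c = s' and d = 1] by simp
  qed
  moreover have "pt 1 0 \<notin> range (\<lambda>s. pt s 1)" using pt_neq[where a = 1 and b = 0 and d = 1] by auto
  ultimately have "card (insert (pt 1 0) (range (\<lambda>s. pt s 1))) = card (UNIV :: 'a set) + 1"
    using assms(1) by (simp add: card_image)
  moreover have "insert (pt 1 0) (range (\<lambda>s. pt s 1)) \<subseteq> {P \<in> pg_points. P \<subseteq> L}"
    by (intro insert_subsetI image_subsetI on_L) simp_all
  then have "card (insert (pt 1 0) (range (\<lambda>s. pt s 1))) \<le> card {P \<in> pg_points. P \<subseteq> L}"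
    using assms(1) by (intro card_mono finite_vec3_sets)
  ultimately show ?thesis by simp
qed

lemma two_eq_zero_if_even_card:
  assumes "finite (UNIV :: 'a::field set)" "even (card (UNIV :: 'a set))"
  shows "(2 :: 'a) = 0"
proof (rule ccontr)
  assume two: "(2 :: 'a) \<noteq> 0"
  have "even (card {x :: 'a. x \<noteq> 0})"
  proof (rule even_card_fixpoint_free_involution[where f = uminus])
    fix x assume "x \<in> {x :: 'a. x \<noteq> 0}"
    then show "- x \<noteq> x" using two by (auto simp: neg_eq_iff_add_eq_0 mult_2[symmetric])
  qed (use assms(1) in auto)
  moreover have "card (insert 0 {x :: 'a. x \<noteq> 0}) = Suc (card {x :: 'a. x \<noteq> 0})"
    using assms(1) by (intro card_insert_disjoint) auto
  moreover have "insert 0 {x :: 'a. x \<noteq> 0} = UNIV" by auto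
  ultimately show False using assms(2) by simp
qed

lemma square_eq_square_iff_char2:
  fixes s t :: "'a::field"
  assumes "(2 :: 'a) = 0"
  shows "s * s = t * t \<longleftrightarrow> s = t"
proof
  have neg: "- x = x" for x :: 'a using assms by (simp add: neg_eq_iff_add_eq_0 mult_2[symmetric])
  assume "s * s = t * t"
  then have "(s + t) * (s + t) = 2 * (t * t) + 2 * (s * t)" by (simp add: algebra_simps mult_2)
  then have "s + t = 0" using assms by simp
  then show "s = t" using neg by (simp add: add_eq_0_iff2)
qed simp

lemma ex_square_root_char2:
  assumes "finite (UNIV :: 'a::field set)" "(2 :: 'a) = 0"
  shows "\<exists>r. r * r = (a :: 'a)"
proof -
  have "inj (\<lambda>r :: 'a. r * r)" using square_eq_square_iff_char2[OF assms(2)] by (simp add: inj_def)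
  with assms(1) have "surj (\<lambda>r :: 'a. r * r)" by (rule finite_UNIV_inj_surj)
  then show ?thesis by (metis surjD)
qed

definition conic_line :: "'a::field \<Rightarrow> 'a vec3 set" where
  "conic_line t = span2 (t, 1, 0) (t * t, 0, 1)"

definition conic_line_inf :: "'a::field vec3 set" where
  "conic_line_inf = span2 (1, 0, 0) (0, 1, 0)"

definition nucleus_line :: "'a::field vec3 set" where
  "nucleus_line = span2 (1, 0, 0) (0, 0, 1)"

text \<open>In line coordinates conic_line t is [1 : t : t^2] up to sign and conic_line_inf is
  [0 : 0 : 1], a dual conic of q + 1 lines; in characteristic 2 its nucleus is the line
  nucleus_line = [0 : 1 : 0], which completes it to a dual hyperoval.\<close>

definition dual_hyperoval :: "'a::field vec3 set set" where
  "dual_hyperoval = insert nucleus_line (insert conic_line_inf (range conic_line))"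

lemma mem_conic_line_iff: "(x, y, z) \<in> conic_line t \<longleftrightarrow> x = y * t + z * (t * t)"
  unfolding conic_line_def mem_span2_triple_iff by auto

lemma mem_conic_line_inf_iff: "(x, y, z) \<in> conic_line_inf \<longleftrightarrow> z = 0"
  unfolding conic_line_inf_def mem_span2_triple_iff by auto

lemma mem_nucleus_line_iff: "(x, y, z) \<in> nucleus_line \<longleftrightarrow> y = 0"
  unfolding nucleus_line_def mem_span2_triple_iff by auto

lemma dual_hyperoval_subset_pg_lines: "dual_hyperoval \<subseteq> pg_lines"
  unfolding dual_hyperoval_def conic_line_def conic_line_inf_def nucleus_line_def
  by (auto intro!: span2_mem_pg_lines simp: lin_indep2_triple_iff)

lemma inj_conic_line: "inj conic_line"
proof (rule injI)
  fix s t :: 'a assume "conic_line s = conic_line t"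
  moreover have "(s, 1, 0) \<in> conic_line s" by (simp add: mem_conic_line_iff)
  ultimately show "s = t" by (simp add: mem_conic_line_iff)
qed

lemma conic_line_neq_conic_line_inf: "conic_line t \<noteq> conic_line_inf"
  using mem_conic_line_iff[of "t * t" 0 1 t] mem_conic_line_inf_iff[of "t * t" 0 1] by auto

lemma conic_line_neq_nucleus_line: "conic_line t \<noteq> nucleus_line"
  using mem_conic_line_iff[of t 1 0 t] mem_nucleus_line_iff[of t 1 0] by auto

lemma conic_line_inf_neq_nucleus_line: "(conic_line_inf :: 'a::field vec3 set) \<noteq> nucleus_line"
  using mem_conic_line_inf_iff[of 0 "1 :: 'a" 0] mem_nucleus_line_iff[of 0 "1 :: 'a" 0] by auto

lemma card_dual_hyperoval_through:
  assumes "finite (UNIV :: 'a::field set)"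
  shows "card {L \<in> dual_hyperoval. (x, y, z) \<in> L} =
    card {t :: 'a. x = y * t + z * (t * t)} + of_bool (z = 0) + of_bool (y = 0)"
proof -
  let ?T = "{t :: 'a. x = y * t + z * (t * t)}"
  let ?special = "{L \<in> {conic_line_inf, nucleus_line}. (x, y, z) \<in> L}"
  have "{L \<in> dual_hyperoval. (x, y, z) \<in> L} = conic_line ` ?T \<union> ?special"
    unfolding dual_hyperoval_def by (auto simp: mem_conic_line_iff)
  moreover have "card (conic_line ` ?T \<union> ?special) = card (conic_line ` ?T) + card ?special"
  proof (rule card_Un_disjoint)
    show "finite (conic_line ` ?T)" using rev_finite_subset[OF assms subset_UNIV] by blast
    show "conic_line ` ?T \<inter> ?special = {}"
      using conic_line_neq_conic_line_inf conic_line_neq_nucleus_line by fastforce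
  qed simp
  moreover have "card (conic_line ` ?T) = card ?T"
    by (intro card_image inj_on_subset[OF inj_conic_line]) simp
  moreover have "card ?special = of_bool (z = 0) + of_bool (y = 0)"
  proof -
    have "?special = (if z = 0 then {conic_line_inf} else {}) \<union> (if y = 0 then {nucleus_line} else {})"
      by (auto simp: mem_conic_line_inf_iff mem_nucleus_line_iff)
    then show ?thesis using conic_line_inf_neq_nucleus_line[where 'a = 'a] by simp
  qed
  ultimately show ?thesis by simp
qed

lemma even_card_dual_hyperoval_through:
  assumes "finite (UNIV :: 'a::field set)" "(2 :: 'a) = 0" "(x, y, z) \<noteq> (0, 0, 0)"
  shows "even (card {L \<in> dual_hyperoval. (x, y, z) \<in> (L :: 'a vec3 set)})"
proof -
  let ?T = "{t :: 'a. x = y * t + z * (t * t)}"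
  have "even (card ?T + of_bool (z = 0) + of_bool (y = 0))"
  proof (cases "z = 0")
    case z: True
    show ?thesis
    proof (cases "y = 0")
      case True
      then have "?T = {}" using z assms(3) by auto
      then show ?thesis using z True by simp
    next
      case False
      then have "?T = {x / y}" using z by (auto simp: field_simps)
      then show ?thesis using z False by simp
    qed
  next
    case z: False
    show ?thesis
    proof (cases "y = 0")
      case True
      obtain r where r: "r * r = x / z" using ex_square_root_char2[OF assms(1,2)] by blast
      have "t \<in> ?T \<longleftrightarrow> t * t = r * r" for t
        using z True r by (auto simp: field_simps)
      then have "?T = {r}" using square_eq_square_iff_char2[OF assms(2)] by blast
      then show ?thesis using z True by simp
    next
      case False
      define a where "a = y / z"
      have y: "y = z * a" using z by (simp add: a_def)
      \<comment> \<open>in characteristic 2 the roots of z t^2 + y t = x come in pairs t, t + y / z\<close>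
      have "even (card ?T)"
      proof (rule even_card_fixpoint_free_involution[where f = "\<lambda>t. t + a"])
        show "finite ?T" using rev_finite_subset[OF assms(1) subset_UNIV] .
        fix t assume "t \<in> ?T"
        moreover have "y * (t + a) + z * ((t + a) * (t + a))
            = y * t + z * (t * t) + 2 * (z * a * (a + t))"
          unfolding y by (simp add: algebra_simps)
        ultimately show "t + a \<in> ?T" using assms(2) by simp
        show "t + a + a = t" using assms(2) by (simp add: mult_2[symmetric])
        show "t + a \<noteq> t" using z False by (simp add: a_def)
      qed
      then show ?thesis using z False by simp
    qed
  qed
  then show ?thesis using card_dual_hyperoval_through[OF assms(1)] by simp
qed

lemma dual_hyperoval_in_bin_kernel:
  assumes "finite (UNIV :: 'a::field set)" "(2 :: 'a) = 0"
  shows "(\<lambda>L. L \<in> (dual_hyperoval :: 'a vec3 set set)) \<in> bin_kernel pg_points pg_lines pg_inc"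
  unfolding bin_kernel_def
proof (intro CollectI conjI ballI)
  show "(\<lambda>L. L \<in> dual_hyperoval) \<in> words pg_lines"
    unfolding words_def using dual_hyperoval_subset_pg_lines by auto
  fix P :: "'a vec3 set" assume "P \<in> pg_points"
  then obtain x y z where P: "P = span1 (x, y, z)" "(x, y, z) \<noteq> (0, 0, 0)"
    unfolding pg_points_eq by auto
  have "{L \<in> pg_lines. P \<subseteq> L \<and> L \<in> dual_hyperoval} = {L \<in> dual_hyperoval. (x, y, z) \<in> L}"
    using dual_hyperoval_subset_pg_lines pg_point_on_line_iff unfolding P(1) by blast
  then show "\<not> syndrome pg_points pg_lines pg_inc (\<lambda>L. L \<in> dual_hyperoval) P"
    unfolding syndrome_def using even_card_dual_hyperoval_through[OF assms P(2)] by simp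
qed

lemma card_dual_hyperoval_le:
  assumes "finite (UNIV :: 'a::field set)"
  shows "card (dual_hyperoval :: 'a vec3 set set) \<le> card (UNIV :: 'a set) + 2"
proof -
  have "finite (range (conic_line :: 'a \<Rightarrow> 'a vec3 set))" using assms by simp
  then have "card (dual_hyperoval :: 'a vec3 set set)
      \<le> card (range (conic_line :: 'a \<Rightarrow> 'a vec3 set)) + 2"
    unfolding dual_hyperoval_def by (simp add: card_insert_if)
  then show ?thesis using card_image_le[OF assms, of conic_line] by simp
qed

lemma min_dist_le_wt:
  assumes "c \<in> C" "c \<noteq> (\<lambda>_. False)"
  shows "min_dist C \<le> wt c"
  unfolding min_dist_def using assms by (auto intro: cInf_lower)

lemma min_dist_pg_kernel_le:
  assumes "finite (UNIV :: 'a::field set)" "(2 :: 'a) = 0"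
  shows "min_dist (bin_kernel (pg_points :: 'a vec3 set set) pg_lines pg_inc)
    \<le> card (UNIV :: 'a set) + 2"
proof -
  have "min_dist (bin_kernel (pg_points :: 'a vec3 set set) pg_lines pg_inc)
      \<le> wt (\<lambda>L. L \<in> (dual_hyperoval :: 'a vec3 set set))"
    using dual_hyperoval_in_bin_kernel[OF assms]
    by (rule min_dist_le_wt) (auto simp: dual_hyperoval_def fun_eq_iff)
  then show ?thesis using card_dual_hyperoval_le[OF assms(1)] by (simp add: wt_def)
qed

theorem theorem3p5:
  fixes c e :: "'a::field vec3 set \<Rightarrow> bool"
  assumes "finite (UNIV :: 'a set)"
    and "even (card (UNIV :: 'a set))"
    and "c \<in> bin_kernel (pg_points :: 'a vec3 set set) pg_lines pg_inc"
    and "e \<in> words (pg_lines :: 'a vec3 set set)"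
    and "wt e \<le> (min_dist (bin_kernel (pg_points :: 'a vec3 set set) pg_lines pg_inc) - 1) div 2"
  shows "bitflip_round (pg_points :: 'a vec3 set set) pg_lines pg_inc (xorw c e) = c"
proof (rule bitflip_round_corrects_errors)
  show "finite (pg_points :: 'a vec3 set set)" "finite (pg_lines :: 'a vec3 set set)"
    using assms(1) by (rule finite_vec3_sets)+
  show "card {P \<in> pg_points. P \<subseteq> L \<and> P \<subseteq> M} \<le> 1"
    if "L \<in> pg_lines" "M \<in> pg_lines" "L \<noteq> M" for L M :: "'a vec3 set"
    using that by (rule card_common_points_le_1)
  have "2 * wt e \<le> card (UNIV :: 'a set) + 1"
    using assms(5) min_dist_pg_kernel_le[OF assms(1) two_eq_zero_if_even_card[OF assms(1,2)]] by linarith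
  then show "2 * wt e \<le> col_weight pg_points pg_inc L" if "L \<in> pg_lines" for L :: "'a vec3 set"
    using card_points_on_pg_line_ge[OF assms(1) that] unfolding col_weight_def by linarith
qed (use assms(3,4) in auto)

end
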